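(* Consider the composite online convex optimization setting in the context, suppose all items of the Regularity Assumption hold, that $\mathcal{A}$ is a Euclidean space with the 2-norm $\|\cdot\|_2$ and $h(x)=\frac12\|x\|_2^2$ (so $\mathbb{B}_h(x,y)=\frac12\|x-y\|_2^2$), that perfect function predictions are available ($\hat{r}_t=r_t$ for all $t$), and that each $s_t$ is $\alpha$-strongly convex. Run OptCMD with $\hat{r}_t=r_t$: starting from some $y_0\in\mathbb{X}$, for $t=1,\dots,T$, $$x_t=\arg\min_{x\in\mathbb{X}}\big\{\eta_t\langle\nabla\hat{s}_t(y_{t-1}),x\rangle+\eta_t r_t(x)+\mathbb{B}_h(x,y_{t-1})\big\},\qquad y_t=\arg\min_{y\in\mathbb{X}}\big\{\eta_t\langle\nabla s_t(x_t),y\rangle+\eta_t r_t(y)+\mathbb{B}_h(y,y_{t-1})\big\},$$ with $\eta_1=\frac{1}{2\beta}$ and $\eta_t=\big(2\beta+\frac{\alpha}{2\sigma^2}D'_{t-1}\big)^{-1}$ for $t>1$. Then $$\mathbf{Reg}^s_T\le O\big(1+\log(1+D'_T)\big),$$ where $O(\cdot)$ hides constants not depending on $T$.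
   Context: Let $\mathcal{A}$ be a Banach space with norm $\|\cdot\|$ and dual norm $\|\cdot\|_*$. Bregman divergence: $\mathbb{B}_h(x,y)=h(x)-h(y)-\langle\nabla h(y),x-y\rangle$. $f$ is $\beta$-smooth if differentiable with $\|\nabla f(x)-\nabla f(y)\|_*\le\beta\|x-y\|$; $f$ is $\alpha$-strongly convex w.r.t. $\|\cdot\|$ if $f(x)-f(y)\le\langle\nabla f(x),x-y\rangle-\frac{\alpha}{2}\|x-y\|^2$ for all $x,y\in\mathbb{X}$. At each round $t=1,\dots,T$ the player picks $x_t\in\mathbb{X}$ and incurs $f_t=s_t+r_t$; before choosing $x_t$ it has a gradient prediction $\nabla\hat{s}_t$ of $\nabla s_t$ and a function prediction $\hat{r}_t$ of $r_t$. Regularity Assumption: (i) $\mathbb{X}\subseteq\mathcal{A}$ convex; (ii) $h$ differentiable and 1-strongly convex on $\mathbb{X}$; (iii) each $s_t$ convex and $\beta$-smooth, each $r_t$ convex; (iv) $\mathbb{B}_h(x,y)\le R^2$ for all $x,y\in\mathbb{X}$, some $R>0$; (v) $\|\nabla s_t(x)-\nabla\hat{s}_t(x)\|_*\le\sigma<\infty$ for all $t$, $x\in\mathbb{X}$; (vi) each $\hat{r}_t$ convex with $|r_t(x)-\hat{r}_t(x)|<\infty$. Gradient prediction error: $D'_t=\sum_{\tau=1}^t\|\nabla s_\tau(y_{\tau-1})-\nabla\hat{s}_\tau(y_{\tau-1})\|_*^2$. Static regret: $\mathbf{Reg}^s_T=\sum_{t=1}^T f_t(x_t)-\min_{x\in\mathbb{X}}\sum_{t=1}^T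 f_t(x)$. *)

theory Defs
  imports "HOL-Analysis.Analysis"
begin

text \<open>Euclidean setting: h(x) = 1/2 ||x||^2, so B_h(x,y) = 1/2 ||x - y||^2.\<close>
definition breg :: "'a::euclidean_space \<Rightarrow> 'a \<Rightarrow> real" where
  "breg x y = (1/2) * (norm (x - y))^2"

text \<open>beta-smoothness: differentiable with gradient g and g is beta-Lipschitz (2-norm is self-dual).\<close>
definition smooth_grad :: "real \<Rightarrow> ('a::euclidean_space \<Rightarrow> real) \<Rightarrow> ('a \<Rightarrow> 'a) \<Rightarrow> bool" where
  "smooth_grad \<beta> f g \<longleftrightarrow>
     (\<forall>x. (f has_derivative (\<lambda>v. g x \<bullet> v)) (at x)) \<and>
     (\<forall>x y. norm (g x - g y) \<le> \<beta> * norm (x - y))"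

definition strongly_convex_grad :: "real \<Rightarrow> 'a::euclidean_space set \<Rightarrow> ('a \<Rightarrow> real) \<Rightarrow> ('a \<Rightarrow> 'a) \<Rightarrow> bool" where
  "strongly_convex_grad \<alpha> X f g \<longleftrightarrow>
     (\<forall>x\<in>X. \<forall>y\<in>X. f x - f y \<le> g x \<bullet> (x - y) - (\<alpha>/2) * (norm (x - y))^2)"

definition is_argmin_on :: "'a set \<Rightarrow> ('a \<Rightarrow> real) \<Rightarrow> 'a \<Rightarrow> bool" where
  "is_argmin_on X F z \<longleftrightarrow> z \<in> X \<and> (\<forall>w\<in>X. F z \<le> F w)"

definition Dprime :: "(nat \<Rightarrow> 'a::euclidean_space \<Rightarrow> 'a) \<Rightarrow> (nat \<Rightarrow> 'a \<Rightarrow> 'a) \<Rightarrow> (nat \<Rightarrow> 'a) \<Rightarrow> nat \<Rightarrow> real" where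
  "Dprime gs gsh y t = (\<Sum>\<tau>=1..t. (norm (gs \<tau> (y (\<tau>-1)) - gsh \<tau> (y (\<tau>-1))))^2)"

definition eta :: "real \<Rightarrow> real \<Rightarrow> real \<Rightarrow> (nat \<Rightarrow> 'a::euclidean_space \<Rightarrow> 'a) \<Rightarrow> (nat \<Rightarrow> 'a \<Rightarrow> 'a) \<Rightarrow> (nat \<Rightarrow> 'a) \<Rightarrow> nat \<Rightarrow> real" where
  "eta \<alpha> \<beta> \<sigma> gs gsh y t =
     (if t = 1 then 1 / (2 * \<beta>)
      else 1 / (2 * \<beta> + \<alpha> / (2 * \<sigma>^2) * Dprime gs gsh y (t - 1)))"

definition optcmd_run ::
  "'a::euclidean_space set \<Rightarrow> real \<Rightarrow> real \<Rightarrow> real \<Rightarrow> (nat \<Rightarrow> 'a \<Rightarrow> real) \<Rightarrow> (nat \<Rightarrow> 'a \<Rightarrow> 'a) \<Rightarrow> (nat \<Rightarrow> 'a \<Rightarrow> 'a)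
    \<Rightarrow> (nat \<Rightarrow> 'a) \<Rightarrow> (nat \<Rightarrow> 'a) \<Rightarrow> nat \<Rightarrow> bool" where
  "optcmd_run X \<alpha> \<beta> \<sigma> r gs gsh x y T \<longleftrightarrow>
     y 0 \<in> X \<and>
     (\<forall>t\<in>{1..T}.
        is_argmin_on X (\<lambda>z. eta \<alpha> \<beta> \<sigma> gs gsh y t * (gsh t (y (t-1)) \<bullet> z)
                              + eta \<alpha> \<beta> \<sigma> gs gsh y t * r t z + breg z (y (t-1))) (x t) \<and>
        is_argmin_on X (\<lambda>z. eta \<alpha> \<beta> \<sigma> gs gsh y t * (gs t (x t) \<bullet> z)
                              + eta \<alpha> \<beta> \<sigma> gs gsh y t * r t z + breg z (y (t-1))) (y t))"

end

theory Submission
  imports Defs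
begin

(* The three-point
   inequality for both steps, Cauchy-Schwarz, beta-smoothness and Young's inequality bound
   the regret of round t against u by
     2 e_t^2 / W_t + W_t/2 ||u - y_(t-1)||^2 - (W_t + kappa e_t^2)/2 ||u - y_t||^2,
   where W_t = 1/eta_t, e_t is the gradient prediction error at y_(t-1) and
   kappa = alpha/(2 sigma^2); the bonus kappa e_t^2 <= alpha/2 is paid for by the
   alpha-strong convexity of s_t.  Since W_(t+1) = W_t + kappa e_t^2 the distance terms
   telescope, and 2 e_t^2 / W_t <= 2/k (ln (1 + D'_t) - ln (1 + D'_(t-1))) with
   k = min (2 beta/(1 + sigma^2)) kappa, so the regret is at most
   beta ||u - y_0||^2 + 2/k ln (1 + D'_T). *)

lemma norm_convex_combination_sq:
  fixes a b :: "'a::real_inner"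
  shows "(norm ((1 - l) *\<^sub>R a + l *\<^sub>R b))^2
           = (1 - l) * (norm a)^2 + l * (norm b)^2 - l * (1 - l) * (norm (b - a))^2"
  unfolding power2_norm_eq_inner
  by (simp add: inner_add_left inner_add_right inner_diff_left inner_diff_right
      inner_commute[of b a] algebra_simps)

lemma argmin_on_quadratic_growth:
  fixes F :: "'a::real_vector \<Rightarrow> real"
  assumes "convex X" and min: "is_argmin_on X F x" and "u \<in> X"
    and strong: "\<And>l. 0 < l \<Longrightarrow> l < 1 \<Longrightarrow>
      F ((1 - l) *\<^sub>R x + l *\<^sub>R u) \<le> (1 - l) * F x + l * F u - \<mu> / 2 * l * (1 - l) * N"
  shows "F x + \<mu> / 2 * N \<le> F u"
proof -
  have bound: "F x + \<mu> / 2 * (1 - l) * N \<le> F u" if l: "0 < l" "l < 1" for l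
  proof -
    have "(1 - l) *\<^sub>R x + l *\<^sub>R u \<in> X"
      using min \<open>u \<in> X\<close> l convexD[OF \<open>convex X\<close>] unfolding is_argmin_on_def by simp
    then have "F x \<le> (1 - l) * F x + l * F u - \<mu> / 2 * l * (1 - l) * N"
      using min strong[OF l] unfolding is_argmin_on_def by fastforce
    then have "l * (F x + \<mu> / 2 * (1 - l) * N) \<le> l * F u"
      by (simp add: algebra_simps)
    then show ?thesis
      using l by simp
  qed
  have "((\<lambda>l. F x + \<mu> / 2 * (1 - l) * N) \<longlongrightarrow> F x + \<mu> / 2 * (1 - 0) * N) (at_right 0)"
    by (intro tendsto_intros)
  moreover have "eventually (\<lambda>l. F x + \<mu> / 2 * (1 - l) * N \<le> F u) (at_right (0::real))"
    unfolding eventually_at_right_field using bound by (intro exI[of _ 1]) auto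
  ultimately show ?thesis
    by (simp add: tendsto_upperbound)
qed

lemma prox_three_point:
  fixes g y x u :: "'a::real_inner"
  assumes "convex X" and r: "convex_on X r" and "0 \<le> \<eta>"
    and x: "is_argmin_on X (\<lambda>z. \<eta> * (g \<bullet> z) + \<eta> * r z + 1/2 * (norm (z - y))^2) x"
    and "u \<in> X"
  shows "\<eta> * (g \<bullet> (x - u)) + \<eta> * (r x - r u)
           \<le> 1/2 * (norm (u - y))^2 - 1/2 * (norm (u - x))^2 - 1/2 * (norm (x - y))^2"
proof -
  define F where "F z = \<eta> * (g \<bullet> z) + \<eta> * r z + 1/2 * (norm (z - y))^2" for z
  have "F x + 1 / 2 * (norm (u - x))^2 \<le> F u"
  proof (rule argmin_on_quadratic_growth[OF \<open>convex X\<close> x[folded F_def] \<open>u \<in> X\<close>])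
    fix l :: real
    assume l: "0 < l" "l < 1"
    define c where "c = (1 - l) *\<^sub>R x + l *\<^sub>R u"
    have "x \<in> X"
      using x by (simp add: is_argmin_on_def)
    then have "r c \<le> (1 - l) * r x + l * r u"
      unfolding c_def using l \<open>u \<in> X\<close> by (intro convex_onD[OF r]) auto
    then have "\<eta> * r c \<le> \<eta> * ((1 - l) * r x + l * r u)"
      using \<open>0 \<le> \<eta>\<close> by (rule mult_left_mono)
    moreover have "(norm (c - y))^2
        = (1 - l) * (norm (x - y))^2 + l * (norm (u - y))^2 - l * (1 - l) * (norm (u - x))^2"
      using norm_convex_combination_sq[of l "x - y" "u - y"] by (simp add: c_def algebra_simps)
    moreover have "g \<bullet> c = (1 - l) * (g \<bullet> x) + l * (g \<bullet> u)"
      by (simp add: c_def inner_add_right)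
    ultimately have "F c \<le> \<eta> * ((1 - l) * (g \<bullet> x) + l * (g \<bullet> u)) + \<eta> * ((1 - l) * r x + l * r u)
        + 1/2 * ((1 - l) * (norm (x - y))^2 + l * (norm (u - y))^2 - l * (1 - l) * (norm (u - x))^2)"
      by (simp add: F_def)
    also have "\<dots> = (1 - l) * F x + l * F u - 1 / 2 * l * (1 - l) * (norm (u - x))^2"
      by (simp add: F_def field_simps)
    finally show "F c \<le> (1 - l) * F x + l * F u - 1 / 2 * l * (1 - l) * (norm (u - x))^2" .
  qed
  then show ?thesis
    unfolding F_def by (simp add: inner_diff_right algebra_simps)
qed

lemma young_cross_term:
  fixes a b e \<beta> w :: real
  assumes "0 \<le> \<beta>" and "2 * \<beta> \<le> w" and "0 < w"
  shows "(\<beta> * a + e) * b \<le> w / 2 * a^2 + 2 * e^2 / w + w / 4 * b^2"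
proof -
  have "(2 * \<beta>)^2 \<le> w^2"
    using assms by (intro power_mono) auto
  then have "0 \<le> (w * b / 2 - e - \<beta> * a)^2 + (e - \<beta> * a)^2 + (w^2 - 4 * \<beta>^2) * a^2 / 2"
    by (intro add_nonneg_nonneg) auto
  also have "\<dots> = w * (w / 2 * a^2 + 2 * e^2 / w + w / 4 * b^2 - (\<beta> * a + e) * b)"
    using \<open>0 < w\<close> by (simp add: field_simps power2_eq_square)
  finally show ?thesis
    using \<open>0 < w\<close> by (simp add: zero_le_mult_iff)
qed

lemma optimistic_prox_step:
  fixes gh G Gp yp x y u :: "'a::real_inner"
  assumes "convex X" and "convex_on X r" and "0 \<le> \<beta>" and "2 * \<beta> \<le> w" and "0 < w"
    and x: "is_argmin_on X (\<lambda>z. 1/w * (gh \<bullet> z) + 1/w * r z + 1/2 * (norm (z - yp))^2) x"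
    and y: "is_argmin_on X (\<lambda>z. 1/w * (G \<bullet> z) + 1/w * r z + 1/2 * (norm (z - yp))^2) y"
    and "u \<in> X"
    and lipschitz: "norm (G - Gp) \<le> \<beta> * norm (x - yp)"
  shows "G \<bullet> (x - u) + r x - r u
           \<le> 2 * (norm (Gp - gh))^2 / w + w/2 * (norm (u - yp))^2 - w/2 * (norm (u - y))^2
              - w/4 * (norm (x - y))^2"
proof -
  have "y \<in> X"
    using y by (simp add: is_argmin_on_def)
  have "1/w * (G \<bullet> (y - u)) + 1/w * (r y - r u)
      \<le> 1/2 * (norm (u - yp))^2 - 1/2 * (norm (u - y))^2 - 1/2 * (norm (y - yp))^2"
    using assms by (intro prox_three_point[OF _ _ _ y]) auto
  moreover have "1/w * (gh \<bullet> (x - y)) + 1/w * (r x - r y)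
      \<le> 1/2 * (norm (y - yp))^2 - 1/2 * (norm (y - x))^2 - 1/2 * (norm (x - yp))^2"
    using assms \<open>y \<in> X\<close> by (intro prox_three_point[OF _ _ _ x]) auto
  ultimately have "(G \<bullet> (x - u) + r x - r u - (G - gh) \<bullet> (x - y)) / w
      \<le> 1/2 * ((norm (u - yp))^2 - (norm (u - y))^2 - (norm (x - y))^2 - (norm (x - yp))^2)"
    by (simp add: norm_minus_commute diff_divide_distrib add_divide_distrib algebra_simps)
  then have "G \<bullet> (x - u) + r x - r u - (G - gh) \<bullet> (x - y)
      \<le> 1/2 * ((norm (u - yp))^2 - (norm (u - y))^2 - (norm (x - y))^2 - (norm (x - yp))^2) * w"
    using \<open>0 < w\<close> by (simp only: pos_divide_le_eq)
  then have sum: "G \<bullet> (x - u) + r x - r u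
      \<le> (G - gh) \<bullet> (x - y) + w/2 * ((norm (u - yp))^2 - (norm (u - y))^2 - (norm (x - y))^2 - (norm (x - yp))^2)"
    by (simp add: algebra_simps)
  have "norm (G - gh) \<le> \<beta> * norm (x - yp) + norm (Gp - gh)"
    using norm_triangle_ineq[of "G - Gp" "Gp - gh"] lipschitz by simp
  then have "(G - gh) \<bullet> (x - y) \<le> (\<beta> * norm (x - yp) + norm (Gp - gh)) * norm (x - y)"
    by (meson norm_cauchy_schwarz mult_right_mono norm_ge_zero order_trans)
  also have "\<dots> \<le> w/2 * (norm (x - yp))^2 + 2 * (norm (Gp - gh))^2 / w + w/4 * (norm (x - y))^2"
    using assms by (intro young_cross_term) auto
  finally show ?thesis
    using sum by (simp add: algebra_simps)
qed

lemma strongly_convex_grad_le_smooth: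
  assumes "strongly_convex_grad \<alpha> X f g" and "smooth_grad \<beta> f g"
    and "a \<in> X" and "b \<in> X" and "a \<noteq> b"
  shows "\<alpha> \<le> \<beta>"
proof -
  have "f a - f b \<le> g a \<bullet> (a - b) - \<alpha>/2 * (norm (a - b))^2"
    and "f b - f a \<le> g b \<bullet> (b - a) - \<alpha>/2 * (norm (b - a))^2"
    using assms unfolding strongly_convex_grad_def by blast+
  then have "\<alpha> * (norm (a - b))^2 \<le> (g a - g b) \<bullet> (a - b)"
    by (simp add: inner_diff_left inner_diff_right norm_minus_commute algebra_simps)
  also have "\<dots> \<le> norm (g a - g b) * norm (a - b)"
    by (rule norm_cauchy_schwarz)
  also have "\<dots> \<le> \<beta> * (norm (a - b))^2"
    using assms(2) unfolding smooth_grad_def power2_eq_square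
    by (metis mult.assoc mult_right_mono norm_ge_zero)
  finally show ?thesis
    using \<open>a \<noteq> b\<close> by simp
qed

lemma power2_norm_diff_le:
  fixes a b c :: "'a::real_normed_vector"
  shows "(norm (a - b))^2 \<le> 2 * (norm (a - c))^2 + 2 * (norm (c - b))^2"
proof -
  have "norm (a - b) \<le> norm (a - c) + norm (c - b)"
    using norm_triangle_ineq[of "a - c" "c - b"] by simp
  then have "(norm (a - b))^2 \<le> (norm (a - c) + norm (c - b))^2"
    by (rule power_mono) simp
  also have "\<dots> \<le> 2 * (norm (a - c))^2 + 2 * (norm (c - b))^2"
    using sum_squares_bound[of "norm (a - c)" "norm (c - b)"] by (simp add: power2_sum)
  finally show ?thesis .
qed

lemma optcmd_round_regret:
  fixes g :: "'a::euclidean_space \<Rightarrow> 'a"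
  assumes "convex X" and "convex_on X r" and "u \<in> X"
    and smooth: "smooth_grad \<beta> s g" and strong: "strongly_convex_grad \<alpha> X s g"
    and "0 \<le> \<alpha>" and "0 \<le> \<beta>" and "2 * \<beta> \<le> w" and "0 < w" and "c \<le> \<alpha> / 2"
    and x: "is_argmin_on X (\<lambda>z. 1/w * (gh \<bullet> z) + 1/w * r z + breg z yp) x"
    and y: "is_argmin_on X (\<lambda>z. 1/w * (g x \<bullet> z) + 1/w * r z + breg z yp) y"
  shows "s x + r x - (s u + r u)
           \<le> 2 * (norm (g yp - gh))^2 / w + w/2 * (norm (u - yp))^2 - (w + c)/2 * (norm (u - y))^2"
proof -
  have "x \<in> X" and "y \<in> X"
    using x y by (simp_all add: is_argmin_on_def)
  have "g x \<bullet> (x - u) + r x - r u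
      \<le> 2 * (norm (g yp - gh))^2 / w + w/2 * (norm (u - yp))^2 - w/2 * (norm (u - y))^2
         - w/4 * (norm (x - y))^2"
    using smooth unfolding smooth_grad_def
    by (intro optimistic_prox_step[OF assms(1,2,7-9) x[unfolded breg_def] y[unfolded breg_def] assms(3)])
      blast
  moreover have "s x - s u \<le> g x \<bullet> (x - u) - \<alpha>/2 * (norm (x - u))^2"
    using strong \<open>x \<in> X\<close> \<open>u \<in> X\<close> unfolding strongly_convex_grad_def by blast
  moreover have "c/2 * (norm (u - y))^2 \<le> \<alpha>/2 * (norm (x - u))^2 + w/4 * (norm (x - y))^2"
  proof -
    have "\<alpha> * (norm (x - y))^2 \<le> w/2 * (norm (x - y))^2"
    proof (cases "x = y")
      case False
      then have "\<alpha> \<le> \<beta>"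
        using strongly_convex_grad_le_smooth[OF strong smooth \<open>x \<in> X\<close> \<open>y \<in> X\<close>] by simp
      then show ?thesis
        using \<open>2 * \<beta> \<le> w\<close> by (intro mult_right_mono) auto
    qed simp
    moreover have "c/2 * (norm (u - y))^2 \<le> \<alpha>/4 * (norm (u - y))^2"
      using \<open>c \<le> \<alpha> / 2\<close> by (intro mult_right_mono) auto
    moreover have "\<alpha>/4 * (norm (u - y))^2 \<le> \<alpha>/4 * (2 * (norm (x - u))^2 + 2 * (norm (x - y))^2)"
      using power2_norm_diff_le[of u y x] \<open>0 \<le> \<alpha>\<close>
      by (intro mult_left_mono) (auto simp: norm_minus_commute)
    ultimately show ?thesis
      by (simp add: algebra_simps)
  qed
  moreover have "(w + c)/2 * (norm (u - y))^2 = w/2 * (norm (u - y))^2 + c/2 * (norm (u - y))^2"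
    by (simp add: add_divide_distrib distrib_right)
  ultimately show ?thesis
    by linarith
qed

lemma ratio_le_ln_increment:
  fixes D \<Delta> k W :: real
  assumes "0 \<le> D" and "0 \<le> \<Delta>" and "0 < k" and "k * (1 + D + \<Delta>) \<le> W"
  shows "\<Delta> / W \<le> (ln (1 + D + \<Delta>) - ln (1 + D)) / k"
proof -
  have "0 < k * (1 + D + \<Delta>)"
    using assms by simp
  moreover from this have "0 < W"
    using assms(4) by linarith
  ultimately have "\<Delta> / W \<le> \<Delta> / (k * (1 + D + \<Delta>))"
    using assms by (intro divide_left_mono) simp_all
  also have "\<dots> = (\<Delta> / (1 + D + \<Delta>)) / k"
    by simp
  also have "\<dots> \<le> (ln (1 + D + \<Delta>) - ln (1 + D)) / k"
    using ln_diff_le[of "1 + D" "1 + D + \<Delta>"] assms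
    by (intro divide_right_mono) (auto simp: diff_divide_distrib)
  finally show ?thesis .
qed

lemma increment_div_weight_le_ln:
  fixes D \<Delta> \<beta> \<kappa> \<sigma> k :: real
  assumes "0 \<le> D" and "0 \<le> \<Delta>" and "\<Delta> \<le> \<sigma>^2"
    and "0 < k" and "k \<le> 2 * \<beta> / (1 + \<sigma>^2)" and "k \<le> \<kappa>"
  shows "\<Delta> / (2 * \<beta> + \<kappa> * D) \<le> (ln (1 + D + \<Delta>) - ln (1 + D)) / k"
proof (rule ratio_le_ln_increment[OF assms(1,2,4)])
  have "k * (1 + \<sigma>^2) \<le> 2 * \<beta>"
    using assms(5) by (simp add: add_pos_nonneg pos_le_divide_eq)
  moreover have "k * \<Delta> \<le> k * \<sigma>^2"
    using assms by simp
  moreover have "k * D \<le> \<kappa> * D"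
    using assms by (intro mult_right_mono)
  ultimately show "k * (1 + D + \<Delta>) \<le> 2 * \<beta> + \<kappa> * D"
    by (simp add: algebra_simps)
qed

lemma Dprime_0 [simp]: "Dprime gs gsh y 0 = 0"
  by (simp add: Dprime_def)

lemma Dprime_Suc:
  "Dprime gs gsh y (Suc n) = Dprime gs gsh y n + (norm (gs (Suc n) (y n) - gsh (Suc n) (y n)))^2"
  by (simp add: Dprime_def)

lemma Dprime_nonneg: "0 \<le> Dprime gs gsh y n"
  by (simp add: Dprime_def sum_nonneg)

definition optcmd_weight :: "real \<Rightarrow> real \<Rightarrow> real \<Rightarrow> (nat \<Rightarrow> 'a::euclidean_space \<Rightarrow> 'a)
    \<Rightarrow> (nat \<Rightarrow> 'a \<Rightarrow> 'a) \<Rightarrow> (nat \<Rightarrow> 'a) \<Rightarrow> nat \<Rightarrow> real"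
  where "optcmd_weight \<alpha> \<beta> \<sigma> gs gsh y n = 2 * \<beta> + \<alpha> / (2 * \<sigma>^2) * Dprime gs gsh y n"

lemma eta_Suc: "eta \<alpha> \<beta> \<sigma> gs gsh y (Suc n) = 1 / optcmd_weight \<alpha> \<beta> \<sigma> gs gsh y n"
  by (simp add: eta_def optcmd_weight_def)

lemma optcmd_run_y_in:
  assumes "optcmd_run X \<alpha> \<beta> \<sigma> r gs gsh x y T" and "n \<le> T"
  shows "y n \<in> X"
proof (cases n)
  case (Suc m)
  then show ?thesis
    using assms by (auto simp: optcmd_run_def is_argmin_on_def)
qed (use assms in \<open>simp add: optcmd_run_def\<close>)

lemma optcmd_run_SucD:
  assumes "optcmd_run X \<alpha> \<beta> \<sigma> r gs gsh x y T" and "n < T"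
  shows "is_argmin_on X (\<lambda>z. 1 / optcmd_weight \<alpha> \<beta> \<sigma> gs gsh y n * (gsh (Suc n) (y n) \<bullet> z)
             + 1 / optcmd_weight \<alpha> \<beta> \<sigma> gs gsh y n * r (Suc n) z + breg z (y n)) (x (Suc n))"
    and "is_argmin_on X (\<lambda>z. 1 / optcmd_weight \<alpha> \<beta> \<sigma> gs gsh y n * (gs (Suc n) (x (Suc n)) \<bullet> z)
             + 1 / optcmd_weight \<alpha> \<beta> \<sigma> gs gsh y n * r (Suc n) z + breg z (y n)) (y (Suc n))"
  using assms unfolding optcmd_run_def eta_Suc[symmetric] by (auto dest: bspec[of _ _ "Suc n"])

lemma optcmd_run_round_regret:
  fixes X :: "'a::euclidean_space set"
  assumes "0 < \<alpha>" and "0 < \<beta>" and "0 < \<sigma>" and "convex X"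
    and "\<And>t. smooth_grad \<beta> (s t) (gs t)"
    and "\<And>t. strongly_convex_grad \<alpha> X (s t) (gs t)"
    and "\<And>t. convex_on X (r t)"
    and \<sigma>: "\<And>t z. z \<in> X \<Longrightarrow> norm (gs t z - gsh t z) \<le> \<sigma>"
    and run: "optcmd_run X \<alpha> \<beta> \<sigma> r gs gsh x y T" and "u \<in> X" and "n < T"
  shows "s (Suc n) (x (Suc n)) + r (Suc n) (x (Suc n)) - (s (Suc n) u + r (Suc n) u)
           \<le> 2 * (Dprime gs gsh y (Suc n) - Dprime gs gsh y n) / optcmd_weight \<alpha> \<beta> \<sigma> gs gsh y n
              + optcmd_weight \<alpha> \<beta> \<sigma> gs gsh y n / 2 * (norm (u - y n))^2
              - optcmd_weight \<alpha> \<beta> \<sigma> gs gsh y (Suc n) / 2 * (norm (u - y (Suc n)))^2"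
proof -
  define W where "W = optcmd_weight \<alpha> \<beta> \<sigma> gs gsh y"
  define e where "e = norm (gs (Suc n) (y n) - gsh (Suc n) (y n))"
  have "e \<le> \<sigma>"
    unfolding e_def using \<sigma> optcmd_run_y_in[OF run] \<open>n < T\<close> by simp
  then have "e^2 \<le> \<sigma>^2"
    by (simp add: e_def power_mono)
  then have "\<alpha> / (2 * \<sigma>^2) * e^2 \<le> \<alpha> / 2"
    using \<open>0 < \<alpha>\<close> \<open>0 < \<sigma>\<close> by (simp add: field_simps)
  moreover have "2 * \<beta> \<le> W n"
    unfolding W_def optcmd_weight_def using \<open>0 < \<alpha>\<close> by (simp add: Dprime_nonneg)
  ultimately have "s (Suc n) (x (Suc n)) + r (Suc n) (x (Suc n)) - (s (Suc n) u + r (Suc n) u)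
      \<le> 2 * e^2 / W n + W n / 2 * (norm (u - y n))^2
         - (W n + \<alpha> / (2 * \<sigma>^2) * e^2) / 2 * (norm (u - y (Suc n)))^2"
    unfolding e_def W_def using assms optcmd_run_SucD[OF run \<open>n < T\<close>]
    by (intro optcmd_round_regret[where g = "gs (Suc n)" and \<beta> = \<beta>]) auto
  moreover have "W (Suc n) = W n + \<alpha> / (2 * \<sigma>^2) * e^2"
    by (simp add: W_def optcmd_weight_def e_def Dprime_Suc algebra_simps)
  ultimately show ?thesis
    by (simp add: W_def e_def Dprime_Suc)
qed

lemma optcmd_regret_le:
  fixes X :: "'a::euclidean_space set"
  assumes "0 < \<alpha>" and "0 < \<beta>" and "0 < \<sigma>" and "convex X"
    and "\<And>t. smooth_grad \<beta> (s t) (gs t)"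
    and "\<And>t. strongly_convex_grad \<alpha> X (s t) (gs t)"
    and "\<And>t. convex_on X (r t)"
    and \<sigma>: "\<And>t z. z \<in> X \<Longrightarrow> norm (gs t z - gsh t z) \<le> \<sigma>"
    and run: "optcmd_run X \<alpha> \<beta> \<sigma> r gs gsh x y T" and "u \<in> X"
    and "0 < k" and "k \<le> 2 * \<beta> / (1 + \<sigma>^2)" and "k \<le> \<alpha> / (2 * \<sigma>^2)"
  shows "(\<Sum>t=1..T. s t (x t) + r t (x t)) - (\<Sum>t=1..T. s t u + r t u)
           \<le> \<beta> * (norm (u - y 0))^2 + 2 / k * ln (1 + Dprime gs gsh y T)"
proof -
  define D where "D = Dprime gs gsh y"
  define W where "W = optcmd_weight \<alpha> \<beta> \<sigma> gs gsh y"
  define \<Phi> where "\<Phi> n = W n / 2 * (norm (u - y n))^2 - 2 / k * ln (1 + D n)" for n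
  have round: "s (Suc n) (x (Suc n)) + r (Suc n) (x (Suc n)) - (s (Suc n) u + r (Suc n) u)
      \<le> \<Phi> n - \<Phi> (Suc n)" if "n < T" for n
  proof -
    have "D (Suc n) - D n \<le> \<sigma>^2"
      using \<sigma> optcmd_run_y_in[OF run] \<open>n < T\<close> by (simp add: D_def Dprime_Suc power_mono)
    moreover have "0 \<le> D n" and "0 \<le> D (Suc n) - D n"
      by (simp_all add: D_def Dprime_nonneg Dprime_Suc)
    ultimately have "(D (Suc n) - D n) / (2 * \<beta> + \<alpha> / (2 * \<sigma>^2) * D n)
        \<le> (ln (1 + D n + (D (Suc n) - D n)) - ln (1 + D n)) / k"
      using assms by (intro increment_div_weight_le_ln) auto
    then have "2 * (D (Suc n) - D n) / W n \<le> 2 / k * ln (1 + D (Suc n)) - 2 / k * ln (1 + D n)"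
      by (simp add: W_def optcmd_weight_def D_def[symmetric] diff_divide_distrib right_diff_distrib)
    moreover have "s (Suc n) (x (Suc n)) + r (Suc n) (x (Suc n)) - (s (Suc n) u + r (Suc n) u)
        \<le> 2 * (D (Suc n) - D n) / W n + W n / 2 * (norm (u - y n))^2
           - W (Suc n) / 2 * (norm (u - y (Suc n)))^2"
      unfolding D_def W_def using assms \<open>n < T\<close> by (intro optcmd_run_round_regret) auto
    ultimately show ?thesis
      unfolding \<Phi>_def by linarith
  qed
  have "(\<Sum>t=1..T. s t (x t) + r t (x t)) - (\<Sum>t=1..T. s t u + r t u)
      = (\<Sum>n<T. s (Suc n) (x (Suc n)) + r (Suc n) (x (Suc n)) - (s (Suc n) u + r (Suc n) u))"
    by (simp add: sum_subtractf sum.atLeast1_atMost_eq)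
  also have "\<dots> \<le> (\<Sum>n<T. \<Phi> n - \<Phi> (Suc n))"
    using round by (intro sum_mono) simp
  also have "\<dots> = \<Phi> 0 - \<Phi> T"
    by (rule sum_lessThan_telescope')
  also have "\<dots> \<le> \<beta> * (norm (u - y 0))^2 + 2 / k * ln (1 + D T)"
    using \<open>0 < \<alpha>\<close> \<open>0 < \<beta>\<close>
    by (simp add: \<Phi>_def W_def D_def optcmd_weight_def Dprime_nonneg)
  finally show ?thesis
    unfolding D_def .
qed

lemma add_mult_le_mult_one_plus:
  fixes a A B L :: real
  assumes "a \<le> A" and "0 \<le> A" and "0 \<le> B" and "0 \<le> L"
  shows "a + B * L \<le> (A + B) * (1 + L)"
proof -
  have "0 \<le> A * L"
    using assms by simp
  moreover have "(A + B) * (1 + L) = A + B + A * L + B * L"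
    by (simp add: algebra_simps)
  ultimately show ?thesis
    using assms by linarith
qed

theorem theorem2:
  fixes \<alpha> \<beta> \<sigma> R :: real
  assumes "\<alpha> > 0" and "\<beta> > 0" and "\<sigma> > 0" and "R > 0"
  shows "\<exists>C::real. \<forall>(X::'a::euclidean_space set) (s::nat \<Rightarrow> 'a \<Rightarrow> real) (r::nat \<Rightarrow> 'a \<Rightarrow> real)
           (gs::nat \<Rightarrow> 'a \<Rightarrow> 'a) (gsh::nat \<Rightarrow> 'a \<Rightarrow> 'a) (x::nat \<Rightarrow> 'a) (y::nat \<Rightarrow> 'a) (T::nat).
     convex X \<longrightarrow>
     (\<forall>t. convex_on X (s t) \<and> smooth_grad \<beta> (s t) (gs t) \<and> strongly_convex_grad \<alpha> X (s t) (gs t)) \<longrightarrow>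
     (\<forall>t. convex_on X (r t)) \<longrightarrow>
     (\<forall>u\<in>X. \<forall>v\<in>X. breg u v \<le> R^2) \<longrightarrow>
     (\<forall>t. \<forall>z\<in>X. norm (gs t z - gsh t z) \<le> \<sigma>) \<longrightarrow>
     optcmd_run X \<alpha> \<beta> \<sigma> r gs gsh x y T \<longrightarrow>
     (\<forall>u\<in>X. (\<Sum>t=1..T. s t (x t) + r t (x t)) - (\<Sum>t=1..T. s t u + r t u)
              \<le> C * (1 + ln (1 + Dprime gs gsh y T)))"
proof -
  define k where "k = min (2 * \<beta> / (1 + \<sigma>^2)) (\<alpha> / (2 * \<sigma>^2))"
  have "0 < k" and "k \<le> 2 * \<beta> / (1 + \<sigma>^2)" and "k \<le> \<alpha> / (2 * \<sigma>^2)"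
    using assms by (simp_all add: k_def add_pos_nonneg)
  show ?thesis
  proof (intro exI[of _ "2 * \<beta> * R^2 + 2 / k"] allI impI ballI)
    fix X :: "'a set" and s r :: "nat \<Rightarrow> 'a \<Rightarrow> real" and gs gsh :: "nat \<Rightarrow> 'a \<Rightarrow> 'a"
      and x y :: "nat \<Rightarrow> 'a" and T :: nat and u :: 'a
    assume "convex X"
      and "\<forall>t. convex_on X (s t) \<and> smooth_grad \<beta> (s t) (gs t) \<and> strongly_convex_grad \<alpha> X (s t) (gs t)"
      and "\<forall>t. convex_on X (r t)" and diam: "\<forall>u\<in>X. \<forall>v\<in>X. breg u v \<le> R^2"
      and "\<forall>t. \<forall>z\<in>X. norm (gs t z - gsh t z) \<le> \<sigma>"
      and run: "optcmd_run X \<alpha> \<beta> \<sigma> r gs gsh x y T" and "u \<in> X"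
    then have "(\<Sum>t=1..T. s t (x t) + r t (x t)) - (\<Sum>t=1..T. s t u + r t u)
        \<le> \<beta> * (norm (u - y 0))^2 + 2 / k * ln (1 + Dprime gs gsh y T)"
      using assms \<open>0 < k\<close> \<open>k \<le> 2 * \<beta> / (1 + \<sigma>^2)\<close> \<open>k \<le> \<alpha> / (2 * \<sigma>^2)\<close>
      by (intro optcmd_regret_le) simp_all
    also have "\<dots> \<le> (2 * \<beta> * R^2 + 2 / k) * (1 + ln (1 + Dprime gs gsh y T))"
    proof (rule add_mult_le_mult_one_plus)
      have "breg u (y 0) \<le> R^2"
        using diam \<open>u \<in> X\<close> optcmd_run_y_in[OF run le0] by blast
      then show "\<beta> * (norm (u - y 0))^2 \<le> 2 * \<beta> * R^2"
        using assms by (simp add: breg_def)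
    qed (use assms \<open>0 < k\<close> in \<open>simp_all add: Dprime_nonneg\<close>)
    finally show "(\<Sum>t=1..T. s t (x t) + r t (x t)) - (\<Sum>t=1..T. s t u + r t u)
        \<le> (2 * \<beta> * R^2 + 2 / k) * (1 + ln (1 + Dprime gs gsh y T))" .
  qed
qed

end
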